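(* Let $\ell\ge1$ and let $V=v_\ell v_\ell\,v_{\ell-1}v_{\ell-1}\cdots v_2v_2\,v_1v_1=\prod_{j=\ell,\dots,2,1}(c_1x^jy^jc_2)^2$, where $v_j=c_1x^jy^jc_2$. The only accepting computation $\varepsilon\,\|\,V\vdash^*\varepsilon\,\|\,\varepsilon$ of the queue automaton is the one that, for each $k$, matches every symbol of one occurrence of $v_k$ in $V$ with the corresponding symbol of the other occurrence of $v_k$ in $V$.
   Context: Queue automaton: a configuration is written $Q\,\|\,x$ ($Q$ = queue contents, $x$ = remaining input); a step from $Q\,\|\,\sigma x$ ($\sigma$ a symbol) goes either to $Q\sigma\,\|\,x$ (push the input symbol) or, if $Q=\sigma Q'$, to $Q'\,\|\,x$ (the input symbol is matched against the leftmost queue symbol, which is popped; that queue symbol was pushed from an earlier input position and the two occurrences are said to be matched). $\vdash^*$ is zero or more steps; $\varepsilon$ is the empty string; an accepting computation of $w$ is a computation $\varepsilon\,\|\,w\vdash^*\varepsilon\,\|\,\varepsilon$. Here $c_1,c_2,x,y$ are four distinct symbols and $u^j$ denotes $j$ concatenated copies of $u$. *)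

theory Defs
  imports Main
begin

text \<open>A configuration Q || x is a pair (queue contents, remaining input).\<close>
type_synonym 'a qconf = "'a list \<times> 'a list"

inductive qstep :: "'a qconf \<Rightarrow> 'a qconf \<Rightarrow> bool" where
  push: "qstep (Q, s # x) (Q @ [s], x)"
| pop:  "qstep (s # Q, s # x) (Q, x)"

definition accepting_comp :: "'a list \<Rightarrow> 'a qconf list \<Rightarrow> bool" where
  "accepting_comp w cs \<longleftrightarrow> cs \<noteq> [] \<and> hd cs = ([], w) \<and> last cs = ([], []) \<and>
     (\<forall>i. Suc i < length cs \<longrightarrow> qstep (cs ! i) (cs ! Suc i))"

text \<open>Step i of a computation reads input position i; it is a push step iff the
  queue grows.\<close>
definition is_push :: "'a qconf list \<Rightarrow> nat \<Rightarrow> bool" where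
  "is_push cs i \<longleftrightarrow> length (fst (cs ! i)) < length (fst (cs ! Suc i))"

text \<open>Input positions p and q are matched: position p is pushed, position q pops,
  and by FIFO order the symbol popped at q is the one pushed at p
  (the n-th pushed symbol is the n-th popped one).\<close>
definition matched :: "'a qconf list \<Rightarrow> nat \<Rightarrow> nat \<Rightarrow> bool" where
  "matched cs p q \<longleftrightarrow> p < q \<and> Suc q < length cs \<and> is_push cs p \<and> \<not> is_push cs q \<and>
     card {j. j < p \<and> is_push cs j} = card {j. j < q \<and> \<not> is_push cs j}"

definition vblock :: "'a \<Rightarrow> 'a \<Rightarrow> 'a \<Rightarrow> 'a \<Rightarrow> nat \<Rightarrow> 'a list" where
  "vblock c1 c2 x y j = [c1] @ replicate j x @ replicate j y @ [c2]"

definition Vword :: "'a \<Rightarrow> 'a \<Rightarrow> 'a \<Rightarrow> 'a \<Rightarrow> nat \<Rightarrow> 'a list" where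
  "Vword c1 c2 x y l = concat (map (\<lambda>j. vblock c1 c2 x y j @ vblock c1 c2 x y j) (rev [1..<Suc l]))"

text \<open>Start position (0-based) of the first occurrence of v_k in V.\<close>
definition voff :: "nat \<Rightarrow> nat \<Rightarrow> nat" where
  "voff l k = (\<Sum>j\<in>{k<..l}. 2 * (2 * j + 2))"

end

theory Submission
  imports Defs "HOL-Library.Multiset" "HOL-Library.Sublist"
begin

text \<open>
  The queue after any prefix of an accepting computation of V is forced. Reading v_l v_l from the
  empty queue, the first copy is pushed entirely, since c1 does not recur in v_l, and the second
  copy pops some prefix of it, leaving a suffix of v_l twice. Unless that suffix is empty, the
  rest V_(l-1) cannot consume it: it contains the block y^l or the word y^j c2 y^j c2. A block r^g
  with r in {x, y} that is longer than all runs of V_m is never consumed: following it through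
  v_j v_j it survives, turns into a block of the other letter of length j > j - 1, or leaves a
  single c1 or c2 in the queue, which contradicts that each letter occurs an even number of times
  in V_m. Two copies of c2 in front of the queue force c1 x^m to be pushed behind them, giving a
  block x^m again. So the queue is empty after each pair v_k v_k, which fixes the computation and
  matches each v_k with its twin.
\<close>

section \<open>Runs of the queue automaton\<close>

text \<open>reads Q w Q' means Q || w |-* Q' || eps.\<close>

fun reads :: "'a list \<Rightarrow> 'a list \<Rightarrow> 'a list \<Rightarrow> bool" where
  "reads Q [] Q' \<longleftrightarrow> Q' = Q"
| "reads Q (a # w) Q' \<longleftrightarrow> reads (Q @ [a]) w Q' \<or> (Q \<noteq> [] \<and> hd Q = a \<and> reads (tl Q) w Q')"

lemma reads_append: "reads Q (u @ v) Q'' \<longleftrightarrow> (\<exists>Q'. reads Q u Q' \<and> reads Q' v Q'')"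
  by (induction u arbitrary: Q) auto

lemma reads_push_all: "reads Q w (Q @ w)"
proof (induction w arbitrary: Q)
  case (Cons a w)
  then show ?case using Cons.IH[of "Q @ [a]"] by simp
qed simp

lemma reads_pop_all: "reads (w @ Q) w Q"
  by (induction w) auto

lemma reads_Cons_push: "Q = [] \<or> hd Q \<noteq> a \<Longrightarrow> reads Q (a # w) Q' \<longleftrightarrow> reads (Q @ [a]) w Q'"
  by auto

lemma reads_hd_not_in:
  assumes "reads Q w Q'" "Q \<noteq> []" "hd Q \<notin> set w"
  shows "Q' = Q @ w"
  using assms by (induction w arbitrary: Q) fastforce+

lemma reads_Nil_prefix_fresh_head:
  assumes "reads [] (take p u) Q" "hd u \<notin> set (tl u)"
  shows "Q = take p u"
proof (cases "p = 0 \<or> u = []")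
  case False
  then have u: "take p u = hd u # take (p - 1) (tl u)" by (cases u; cases p) auto
  with assms(1) have "reads [hd u] (take (p - 1) (tl u)) Q" by simp
  moreover have "hd u \<notin> set (take (p - 1) (tl u))" using assms(2) by (meson in_set_takeD)
  ultimately have "Q = [hd u] @ take (p - 1) (tl u)" by (intro reads_hd_not_in) simp_all
  with u show ?thesis by simp
qed (use assms(1) in auto)

lemma reads_shape:
  assumes "reads Q w Q'"
  obtains i C where "Q' = drop i Q @ C" "mset (take i Q) + mset C \<subseteq># mset w"
  using assms
proof (induction w arbitrary: Q thesis)
  case Nil
  then show ?case using Nil.prems(1)[of 0 "[]"] by simp
next
  case (Cons b w)
  from Cons.prems(2) consider (push) "reads (Q @ [b]) w Q'" | (pop) Q0 where "Q = b # Q0" "reads Q0 w Q'"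
    by (cases Q) auto
  then show ?case
  proof cases
    case push
    then obtain i C where i: "Q' = drop i (Q @ [b]) @ C" "mset (take i (Q @ [b])) + mset C \<subseteq># mset w"
      using Cons.IH by blast
    show ?thesis
    proof (cases "i \<le> length Q")
      case True
      then show ?thesis using i Cons.prems(1)[of i "b # C"] by simp
    next
      case False
      with i have "take i (Q @ [b]) = Q @ [b]" "Q' = C" by simp_all
      have "mset Q + mset C \<subseteq># mset (Q @ [b]) + mset C" by simp
      also have "\<dots> \<subseteq># mset w" using i(2) unfolding \<open>take i (Q @ [b]) = Q @ [b]\<close> .
      also have "\<dots> \<subseteq># mset (b # w)" by simp
      finally show ?thesis using Cons.prems(1)[of "length Q" C] \<open>Q' = C\<close> by simp
    qed
  next
    case pop
    with Cons.IH obtain i C where "Q' = drop i Q0 @ C" "mset (take i Q0) + mset C \<subseteq># mset w"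
      by blast
    with pop show ?thesis using Cons.prems(1)[of "Suc i" C] by simp
  qed
qed

lemma reads_empty_length:
  assumes "reads Q w []"
  shows "length Q \<le> length w"
proof -
  obtain i C where i: "[] = drop i Q @ C" "mset (take i Q) + mset C \<subseteq># mset w"
    using reads_shape[OF assms] .
  from i(1) have "take i Q = Q" by simp
  with size_mset_mono[OF subset_mset.order_trans[OF mset_subset_eq_add_left i(2)]] show ?thesis
    by simp
qed

lemma reads_count_parity:
  "reads Q w Q' \<Longrightarrow> even (count (mset Q) a + count (mset w) a + count (mset Q') a)"
proof (induction w arbitrary: Q)
  case (Cons b w)
  then consider (push) "reads (Q @ [b]) w Q'" | (pop) Q0 where "Q = b # Q0" "reads Q0 w Q'"
    by (cases Q) auto
  then show ?case
  proof cases
    case push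
    have "count (mset Q) a + count (mset (b # w)) a = count (mset (Q @ [b])) a + count (mset w) a"
      by simp
    then show ?thesis using Cons.IH[OF push] by presburger
  next
    case pop
    obtain k where "count (mset Q) a + count (mset (b # w)) a = count (mset Q0) a + count (mset w) a + 2 * k"
      using pop(1) by (cases "a = b") auto
    then show ?thesis using Cons.IH[OF pop(2)] by presburger
  qed
qed simp

lemma reads_count_not_in:
  "reads Q w Q' \<Longrightarrow> a \<notin> set w \<Longrightarrow> count (mset Q') a = count (mset Q) a"
proof (induction w arbitrary: Q)
  case (Cons b w)
  then consider (push) "reads (Q @ [b]) w Q'" | (pop) Q0 where "Q = b # Q0" "reads Q0 w Q'"
    by (cases Q) auto
  then show ?case
  proof cases
    case push
    then show ?thesis using Cons.IH[of "Q @ [b]"] Cons.prems(2) by auto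
  next
    case pop
    then show ?thesis using Cons.IH[of Q0] Cons.prems(2) by auto
  qed
qed simp

lemma reads_keeps_factor:
  assumes "reads (A @ R @ B) w Q'" "R \<noteq> []" "hd R \<notin> set w"
  obtains i C where "Q' = drop i A @ R @ B @ C" "mset (take i A) + mset C \<subseteq># mset w"
proof -
  obtain i C where i: "Q' = drop i (A @ R @ B) @ C" "mset (take i (A @ R @ B)) + mset C \<subseteq># mset w"
    using reads_shape[OF assms(1)] .
  have "i \<le> length A"
  proof (rule ccontr)
    assume "\<not> i \<le> length A"
    then have "hd R \<in> set (take i (A @ R @ B))"
      using assms(2) by (cases R; cases "i - length A") (auto simp: take_append)
    then have "hd R \<in># mset w"
      using mset_subset_eqD[OF subset_mset.order_trans[OF mset_subset_eq_add_left i(2)]] by simp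
    then show False using assms(3) by simp
  qed
  then show thesis using i that[of i C] by simp
qed

lemma reads_single_at_factor:
  assumes "reads (D @ (a # X) @ C) [a] Q'"
  obtains D' C' where "Q' = D' @ (a # X) @ C'"
    | "D = []" "Q' = X @ C"
proof -
  from assms consider (push) "Q' = D @ (a # X) @ C @ [a]" | (pop) "D \<noteq> []" "Q' = tl D @ (a # X) @ C"
    | (pop_a) "D = []" "Q' = X @ C"
    by (cases D) auto
  then show thesis
  proof cases
    case push
    then show thesis by (intro that(1)[of D "C @ [a]"]) simp
  next
    case pop
    then show thesis by (intro that(1)[of "tl D" C])
  qed (rule that(2))
qed

lemma reads_into_long_block:
  assumes "reads (A @ replicate g r @ B) w Q'" "length w < g"
  obtains A' C where "Q' = A' @ replicate g r @ B @ C"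
    | k C where "0 < k" "Q' = replicate k r @ B @ C"
proof -
  obtain i C where i: "Q' = drop i (A @ replicate g r @ B) @ C"
    "mset (take i (A @ replicate g r @ B)) + mset C \<subseteq># mset w"
    using reads_shape[OF assms(1)] .
  have "length (take i (A @ replicate g r @ B)) \<le> length w"
    using size_mset_mono[OF subset_mset.order_trans[OF mset_subset_eq_add_left i(2)]] by simp
  show thesis
  proof (cases "i \<le> length A")
    case True
    then show thesis using i(1) that(1) by simp
  next
    case False
    then have "i - length A < g" using assms(2) \<open>length (take i _) \<le> length w\<close> by auto
    moreover from this have "Q' = replicate (g - (i - length A)) r @ B @ C"
      using i(1) False by (simp add: drop_append)
    ultimately show thesis by (intro that(2)[of "g - (i - length A)" C]) simp_all
  qed
qed

lemma reads_across_long_block: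
  assumes "reads (A @ replicate g r @ B) (u @ v @ w) Q'" "length v < g" "r \<notin> set u" "r \<notin> set w"
  obtains A' B' where "Q' = A' @ replicate g r @ B'"
    | k T where "0 < k" "Q' = replicate k r @ T @ w"
proof -
  obtain Q1 Q2 where r1: "reads (A @ replicate g r @ B) u Q1" and r2: "reads Q1 v Q2"
    and r3: "reads Q2 w Q'"
    using assms(1) by (auto simp: reads_append)
  have g: "replicate g r \<noteq> []" "hd (replicate g r) \<notin> set u" "hd (replicate g r) \<notin> set w"
    using assms(2-4) by auto
  obtain A1 C1 where Q1: "Q1 = A1 @ replicate g r @ B @ C1"
    using reads_keeps_factor[OF r1 g(1,2)] by blast
  from r2[unfolded Q1] assms(2) show thesis
  proof (cases rule: reads_into_long_block)
    case (1 A2 C2)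
    then show thesis using reads_keeps_factor[OF r3[unfolded 1] g(1,3)] that(1) by blast
  next
    case (2 k C2)
    then have "Q2 \<noteq> []" "hd Q2 = r" by (cases k; simp)+
    with r3 assms(4) have "Q' = Q2 @ w" by (intro reads_hd_not_in) simp_all
    with 2 show thesis using that(2) by simp
  qed
qed

lemma sublist_Cons_middle: "sublist xs (ps @ (a # xs) @ ss)"
  using sublist_appendI[of xs "ps @ [a]" ss] by simp

definition letters_contiguous :: "'a list \<Rightarrow> bool" where
  "letters_contiguous u \<longleftrightarrow>
     (\<forall>i j k. i \<le> j \<longrightarrow> j \<le> k \<longrightarrow> k < length u \<longrightarrow> u ! i = u ! k \<longrightarrow> u ! j = u ! i)"

lemma reads_own_prefix:
  assumes "letters_contiguous u" "p \<le> length u" "reads u (take p u) Q"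
  shows "\<exists>q \<le> p. Q = drop q u @ drop q (take p u)"
  using assms(2,3)
proof (induction p arbitrary: Q)
  case 0
  then show ?case by simp
next
  case (Suc p)
  then have p: "p < length u" by simp
  then have "take (Suc p) u = take p u @ [u ! p]" by (simp add: take_Suc_conv_app_nth)
  with Suc.prems(2) obtain Q0 where r0: "reads u (take p u) Q0" and r1: "reads Q0 [u ! p] Q"
    by (auto simp: reads_append)
  from Suc.IH[OF _ r0] p obtain q where q: "q \<le> p" "Q0 = drop q u @ drop q (take p u)" by auto
  have uq: "drop q u = u ! q # drop (Suc q) u" using q(1) p by (simp add: Cons_nth_drop_Suc)
  from r1 consider (push) "Q = Q0 @ [u ! p]" | (pop) "hd Q0 = u ! p" "Q = tl Q0" by auto
  then show ?case
  proof cases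
    case push
    then have "Q = drop q u @ drop q (take (Suc p) u)"
      using q p by (simp add: take_Suc_conv_app_nth)
    then show ?thesis using q(1) by (intro exI[of _ q]) simp
  next
    case pop
    then have same: "u ! q = u ! p" using q(2) uq by simp
    have contig: "u ! j = u ! q" if "q \<le> j" "j \<le> p" for j
      using assms(1) that p same unfolding letters_contiguous_def by force
    have "drop q (take p u) = drop (Suc q) (take (Suc p) u)"
    proof (rule nth_equalityI)
      fix j assume "j < length (drop q (take p u))"
      then have "q + j < p" by simp
      then have "u ! (q + j) = u ! q" "u ! (Suc q + j) = u ! q" by (auto intro: contig)
      with \<open>q + j < p\<close> p show "drop q (take p u) ! j = drop (Suc q) (take (Suc p) u) ! j" by simp
    qed (use p in simp)
    then have "Q = drop (Suc q) u @ drop (Suc q) (take (Suc p) u)" using pop q(2) uq by simp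
    then show ?thesis using q(1) by (intro exI[of _ "Suc q"]) simp
  qed
qed

section \<open>Accepting computations\<close>

lemma qstep_iff_reads: "qstep (Q, u) (Q', u') \<longleftrightarrow> (\<exists>a. u = a # u' \<and> reads Q [a] Q')"
proof
  assume "qstep (Q, u) (Q', u')"
  then show "\<exists>a. u = a # u' \<and> reads Q [a] Q'" by cases auto
next
  assume "\<exists>a. u = a # u' \<and> reads Q [a] Q'"
  then obtain a where "u = a # u'" "Q' = Q @ [a] \<or> (Q \<noteq> [] \<and> hd Q = a \<and> Q' = tl Q)" by auto
  then show "qstep (Q, u) (Q', u')" by (metis list.collapse qstep.push qstep.pop)
qed

lemma reads_computation:
  "reads Q w Q' \<Longrightarrow> \<exists>cs. cs \<noteq> [] \<and> hd cs = (Q, w) \<and> last cs = (Q', []) \<and>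
     (\<forall>i. Suc i < length cs \<longrightarrow> qstep (cs ! i) (cs ! Suc i))"
proof (induction w arbitrary: Q)
  case Nil
  then show ?case by (intro exI[of _ "[(Q, [])]"]) simp
next
  case (Cons a w)
  then obtain Q1 where "reads Q [a] Q1" "reads Q1 w Q'"
    using reads_append[of Q "[a]" w Q'] by auto
  moreover from this(2) obtain cs where cs: "cs \<noteq> []" "hd cs = (Q1, w)" "last cs = (Q', [])"
    "\<forall>i. Suc i < length cs \<longrightarrow> qstep (cs ! i) (cs ! Suc i)"
    using Cons.IH by blast
  ultimately have "qstep (Q, a # w) (cs ! 0)" by (simp add: qstep_iff_reads hd_conv_nth[symmetric])
  with cs(4) have "\<forall>i. Suc i < length ((Q, a # w) # cs) \<longrightarrow>
      qstep (((Q, a # w) # cs) ! i) (((Q, a # w) # cs) ! Suc i)"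
    by (auto simp: nth_Cons split: nat.split)
  with cs show ?case by (intro exI[of _ "(Q, a # w) # cs"]) simp
qed

lemma accepting_comp_first: "accepting_comp w cs \<Longrightarrow> cs ! 0 = ([], w)"
  by (metis accepting_comp_def hd_conv_nth)

lemma accepting_comp_input:
  assumes "accepting_comp w cs" "i < length cs"
  shows "snd (cs ! i) = drop i w"
  using assms(2)
proof (induction i)
  case 0
  with assms(1) show ?case by (simp add: accepting_comp_first)
next
  case (Suc i)
  with assms(1) have "qstep (cs ! i) (cs ! Suc i)" by (simp add: accepting_comp_def)
  with Suc show ?case by (cases "cs ! i", cases "cs ! Suc i") (auto simp: qstep_iff_reads drop_Suc simp flip: tl_drop)
qed

lemma accepting_comp_length:
  assumes "accepting_comp w cs"
  shows "length cs = Suc (length w)"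
proof -
  have ne: "cs \<noteq> []" and "last cs = ([], [])" using assms by (auto simp: accepting_comp_def)
  then have "drop (length cs - 1) w = []"
    using accepting_comp_input[OF assms, of "length cs - 1"] by (simp add: last_conv_nth)
  moreover have "\<not> length w < length cs - 1"
  proof
    assume short: "length w < length cs - 1"
    then have "qstep (cs ! length w) (cs ! Suc (length w))"
      using assms by (simp add: accepting_comp_def)
    moreover have "snd (cs ! length w) = []" using accepting_comp_input[OF assms, of "length w"] short by simp
    ultimately show False by (cases "cs ! length w") (auto simp: qstep_iff_reads)
  qed
  ultimately show ?thesis using ne by (cases cs) auto
qed

lemma accepting_comp_reads:
  assumes "accepting_comp w cs" "i \<le> j" "j \<le> length w"
  shows "reads (fst (cs ! i)) (drop i (take j w)) (fst (cs ! j))"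
  using assms(2,3)
proof (induction j rule: dec_induct)
  case (step j)
  have "Suc j < length cs" using step.prems accepting_comp_length[OF assms(1)] by simp
  with assms(1) have "qstep (cs ! j) (cs ! Suc j)" by (simp add: accepting_comp_def)
  moreover have "cs ! j = (fst (cs ! j), w ! j # drop (Suc j) w)"
    using accepting_comp_input[OF assms(1), of j] \<open>Suc j < length cs\<close> step.prems
    by (simp add: Cons_nth_drop_Suc prod_eq_iff)
  moreover have "cs ! Suc j = (fst (cs ! Suc j), drop (Suc j) w)"
    using accepting_comp_input[OF assms(1)] \<open>Suc j < length cs\<close> by (simp add: prod_eq_iff)
  ultimately have "reads (fst (cs ! j)) [w ! j] (fst (cs ! Suc j))"
    by (metis list.inject qstep_iff_reads)
  moreover have "drop i (take (Suc j) w) = drop i (take j w) @ [w ! j]"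
    using step by (simp add: take_Suc_conv_app_nth)
  ultimately show ?case using step by (auto simp: reads_append)
qed simp

lemma accepting_comp_reads_split:
  assumes "accepting_comp w cs" "i \<le> length w"
  shows "reads [] (take i w) (fst (cs ! i))" "reads (fst (cs ! i)) (drop i w) []"
proof -
  have "fst (cs ! 0) = []" using accepting_comp_first[OF assms(1)] by simp
  moreover have "fst (cs ! length w) = []"
    using assms(1) accepting_comp_length[OF assms(1)] by (auto simp: accepting_comp_def last_conv_nth)
  ultimately
  show "reads [] (take i w) (fst (cs ! i))" "reads (fst (cs ! i)) (drop i w) []"
    using accepting_comp_reads[OF assms(1), of 0 i] accepting_comp_reads[OF assms(1), of i "length w"]
      assms(2) by simp_all
qed

lemma accepting_comp_eq:
  assumes "accepting_comp w cs"
  shows "cs = map (\<lambda>i. (fst (cs ! i), drop i w)) [0..<Suc (length w)]"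
  using accepting_comp_length[OF assms] accepting_comp_input[OF assms]
  by (intro nth_equalityI) (auto simp del: upt_Suc simp: prod_eq_iff)

lemma card_less_Suc_conj: "card {j. j < Suc n \<and> P j} = card {j. j < n \<and> P j} + (if P n then 1 else 0)"
proof -
  have "{j. j < Suc n \<and> P j} = (if P n then insert n {j. j < n \<and> P j} else {j. j < n \<and> P j})"
    by (auto simp: less_Suc_eq)
  then show ?thesis by simp
qed

lemma accepting_comp_push_count:
  assumes "accepting_comp w cs" "n \<le> length w"
  shows "2 * card {j. j < n \<and> is_push cs j} = n + length (fst (cs ! n))"
    and "2 * card {j. j < n \<and> \<not> is_push cs j} + length (fst (cs ! n)) = n"
proof -
  have "2 * card {j. j < n \<and> is_push cs j} = n + length (fst (cs ! n)) \<and>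
      2 * card {j. j < n \<and> \<not> is_push cs j} + length (fst (cs ! n)) = n"
    using assms(2)
  proof (induction n)
    case 0
    with assms(1) show ?case by (simp add: accepting_comp_first)
  next
    case (Suc n)
    then have "Suc n < length cs" using accepting_comp_length[OF assms(1)] by simp
    with assms(1) have "qstep (cs ! n) (cs ! Suc n)" by (simp add: accepting_comp_def)
    then have "length (fst (cs ! Suc n)) = Suc (length (fst (cs ! n))) \<or>
        length (fst (cs ! n)) = Suc (length (fst (cs ! Suc n)))"
      by (cases "cs ! n", cases "cs ! Suc n") (auto simp: qstep_iff_reads)
    with Suc show ?case by (auto simp: card_less_Suc_conj is_push_def)
  qed
  then show "2 * card {j. j < n \<and> is_push cs j} = n + length (fst (cs ! n))"
    and "2 * card {j. j < n \<and> \<not> is_push cs j} + length (fst (cs ! n)) = n" by simp_all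
qed

lemma matched_if_queue_lengths:
  assumes "accepting_comp w cs" "p < q" "q < length w" "is_push cs p" "\<not> is_push cs q"
    "p + length (fst (cs ! p)) + length (fst (cs ! q)) = q"
  shows "matched cs p q"
  using accepting_comp_push_count[OF assms(1), of p] accepting_comp_push_count[OF assms(1), of q]
    accepting_comp_length[OF assms(1)] assms(2-6)
  unfolding matched_def by simp

section \<open>The word V\<close>

locale vword =
  fixes c1 c2 x y :: 'a
begin

abbreviation v :: "nat \<Rightarrow> 'a list" where "v \<equiv> vblock c1 c2 x y"
abbreviation V :: "nat \<Rightarrow> 'a list" where "V \<equiv> Vword c1 c2 x y"

lemma vblock_eq: "v s = c1 # replicate s x @ replicate s y @ [c2]"
  by (simp add: vblock_def)

lemma length_vblock: "length (v s) = 2 * s + 2"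
  by (simp add: vblock_eq)

lemma nth_vblock:
  "i < length (v s) \<Longrightarrow> v s ! i = (if i = 0 then c1 else if i \<le> s then x else if i \<le> 2 * s then y else c2)"
  by (auto simp: vblock_eq nth_Cons' nth_append)

lemma Vword_0: "V 0 = []"
  by (simp add: Vword_def)

lemma Vword_Suc: "V (Suc m) = v (Suc m) @ v (Suc m) @ V m"
  by (simp add: Vword_def)

lemma length_Vword_Suc: "length (V (Suc m)) = 2 * length (v (Suc m)) + length (V m)"
  by (simp add: Vword_Suc)

lemma reads_Vword: "reads [] (V m) []"
proof (induction m)
  case (Suc m)
  have "reads [] (v (Suc m)) (v (Suc m))" "reads (v (Suc m)) (v (Suc m)) []"
    using reads_push_all[of "[]" "v (Suc m)"] reads_pop_all[of "v (Suc m)" "[]"] by simp_all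
  with Suc show ?case by (auto simp: Vword_Suc reads_append)
qed (simp add: Vword_0)

lemma reads_Vword_empty_even:
  assumes "reads Q (V m) []"
  shows "even (count (mset Q) a)"
proof -
  have "even (count (mset (V m)) a)"
    by (induction m) (simp_all add: Vword_0 Vword_Suc)
  then show ?thesis using reads_count_parity[OF assms, of a] by simp
qed

text \<open>The queue after the first i symbols of V m: the first copy of each v_k is pushed and the
  second copy pops it.\<close>

fun Vword_queue :: "nat \<Rightarrow> nat \<Rightarrow> 'a list" where
  "Vword_queue 0 i = []"
| "Vword_queue (Suc m) i =
     (if i \<le> length (v (Suc m)) then take i (v (Suc m))
      else if i \<le> 2 * length (v (Suc m)) then drop (i - length (v (Suc m))) (v (Suc m))
      else Vword_queue m (i - 2 * length (v (Suc m))))"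

lemma Vword_queue_0: "Vword_queue m 0 = []"
  by (cases m) simp_all

lemma Vword_queue_shift: "Vword_queue (Suc m) (2 * length (v (Suc m)) + j) = Vword_queue m j"
  by (cases j) (simp_all add: Vword_queue_0)

lemma voff_self: "voff m m = 0"
  by (simp add: voff_def)

lemma voff_Suc:
  assumes "k \<le> m"
  shows "voff (Suc m) k = 2 * length (v (Suc m)) + voff m k"
proof -
  have "{k<..Suc m} = insert (Suc m) {k<..m}" using assms by auto
  then show ?thesis by (simp add: voff_def length_vblock)
qed

lemma voff_bound:
  assumes "1 \<le> k" "k \<le> m"
  shows "voff m k + 2 * length (v k) \<le> length (V m)"
  using assms
proof (induction m)
  case (Suc m)
  then show ?case
    by (cases "k = Suc m") (simp_all add: voff_self voff_Suc length_Vword_Suc)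
qed simp

lemma Vword_queue_voff:
  assumes "1 \<le> k" "k \<le> m" "j \<le> 2 * length (v k)"
  shows "Vword_queue m (voff m k + j) =
    (if j \<le> length (v k) then take j (v k) else drop (j - length (v k)) (v k))"
  using assms
proof (induction m)
  case (Suc m)
  show ?case
  proof (cases "k = Suc m")
    case True
    then show ?thesis using Suc.prems(3) by (simp add: voff_self)
  next
    case False
    then have "voff (Suc m) k + j = 2 * length (v (Suc m)) + (voff m k + j)"
      using Suc.prems(2) voff_Suc by simp
    then show ?thesis using Suc False by (simp only: Vword_queue_shift)
  qed
qed simp

end

locale distinct_vword = vword +
  assumes distinct: "distinct [c1, c2, x, y]"
begin

section \<open>Long blocks cannot be consumed\<close>

lemma reads_vblock_after_x_front:
  assumes "reads (replicate k x @ T @ replicate s y @ [c2]) (v s) Q'" "0 < k"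
  shows "sublist (replicate s y) Q' \<or> odd (count (mset Q') c1)"
proof -
  let ?P = "replicate k x @ T"
  let ?w = "replicate s x @ replicate s y @ [c2]"
  have "hd (?P @ replicate s y @ [c2]) \<noteq> c1" using assms(2) distinct by (cases k) auto
  then have r: "reads (?P @ replicate s y @ [c2, c1]) ?w Q'"
    using assms(1) by (simp add: vblock_eq reads_Cons_push)
  have c1: "c1 \<notin> set ?w" using distinct by auto
  show ?thesis
  proof (cases "c1 \<in> set ?P")
    case True
    then obtain P1 P2 where "?P = P1 @ c1 # P2" by (meson split_list)
    with r have "reads (P1 @ (c1 # P2 @ replicate s y @ [c2, c1]) @ []) ?w Q'" by simp
    then obtain i C where "Q' = drop i P1 @ (c1 # P2 @ replicate s y @ [c2, c1]) @ [] @ C"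
      by (rule reads_keeps_factor) (use c1 in auto)
    then have "Q' = (drop i P1 @ c1 # P2) @ replicate s y @ ([c2, c1] @ C)" by simp
    then show ?thesis by (simp only: sublist_appendI simp_thms)
  next
    case False
    then have "count (mset (?P @ replicate s y @ [c2, c1])) c1 = 1" using distinct by auto
    then show ?thesis using reads_count_not_in[OF r c1] by simp
  qed
qed

lemma reads_vblock_keeps_c1_x:
  assumes "reads P (v s) Q'" "P \<noteq> []" "hd P \<notin> {c1, x}"
  obtains i C where "Q' = drop i P @ (c1 # replicate s x) @ C"
    "mset (take i P) + mset C \<subseteq># mset (replicate s y @ [c2])"
proof -
  have "v s = (c1 # replicate s x) @ replicate s y @ [c2]" by (simp add: vblock_eq)
  with assms(1) obtain Qa where ra: "reads P (c1 # replicate s x) Qa"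
    and rb: "reads Qa (replicate s y @ [c2]) Q'"
    by (auto simp only: reads_append)
  from ra assms(2,3) have "Qa = P @ (c1 # replicate s x) @ []"
    by (intro reads_hd_not_in) auto
  with rb have "reads (P @ (c1 # replicate s x) @ []) (replicate s y @ [c2]) Q'" by simp
  then show thesis
    by (rule reads_keeps_factor) (use distinct that in auto)
qed

lemma reads_vblock_from_c1_x_factor:
  assumes "reads (D @ (c1 # replicate s x) @ C) (v s) Q'"
  obtains "sublist (replicate s x) Q'"
    | "D = []" "reads (replicate s x @ C) (replicate s x @ replicate s y @ [c2]) Q'"
proof -
  have "v s = [c1] @ replicate s x @ replicate s y @ [c2]" by (simp add: vblock_eq)
  with assms obtain Qc where rc: "reads (D @ (c1 # replicate s x) @ C) [c1] Qc"
    and rest: "reads Qc (replicate s x @ replicate s y @ [c2]) Q'"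
    by (auto simp only: reads_append)
  from rc show thesis
  proof (cases rule: reads_single_at_factor)
    case (1 D' C')
    with rest have "reads (D' @ (c1 # replicate s x) @ C') (replicate s x @ replicate s y @ [c2]) Q'"
      by simp
    then obtain i C'' where "Q' = drop i D' @ (c1 # replicate s x) @ C' @ C''"
      by (rule reads_keeps_factor) (use distinct in auto)
    then show thesis by (intro that(1)) (simp only: sublist_Cons_middle)
  next
    case 2
    with rest show thesis by (intro that(2)) simp_all
  qed
qed

lemma reads_vblock_pair_after_y_front:
  assumes "reads (replicate k y @ T) (v s @ v s) Q'" "0 < k" "c2 \<in> set T"
  shows "sublist (replicate s x) Q' \<or> odd (count (mset Q') c2)"
proof -
  let ?P = "replicate k y @ T"
  from assms(1) obtain Qm where rm: "reads ?P (v s) Qm" and r: "reads Qm (v s) Q'"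
    by (auto simp: reads_append simp del: reads.simps(2))
  have "hd ?P \<notin> {c1, x}" using assms(2) distinct by (cases k) auto
  then obtain i C where i: "Qm = drop i ?P @ (c1 # replicate s x) @ C"
    "mset (take i ?P) + mset C \<subseteq># mset (replicate s y @ [c2])"
    using reads_vblock_keeps_c1_x[OF rm] assms(2) by auto
  from r[unfolded i(1)] show ?thesis
  proof (cases rule: reads_vblock_from_c1_x_factor)
    case 2
    \<comment> \<open>all of ?P, in particular the c2 in T, was popped while reading y^s c2\<close>
    then have "0 < count (mset (take i ?P)) c2" using assms(3) by (simp add: count_mset_gt_0)
    moreover have "count (mset (take i ?P)) c2 + count (mset C) c2 \<le> 1"
      using mset_subset_eq_count[OF i(2), of c2] distinct by auto
    ultimately have "count (mset C) c2 = 0" by linarith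
    from 2(2) obtain Qb where rb: "reads (replicate s x @ C) (replicate s x @ replicate s y) Qb"
      and "reads Qb [c2] Q'"
      by (auto simp: reads_append simp del: reads.simps(2))
    have "count (mset Qb) c2 = 0"
      using reads_count_not_in[OF rb] \<open>count (mset C) c2 = 0\<close> distinct by auto
    with \<open>reads Qb [c2] Q'\<close> have "Q' = Qb @ [c2]" by (cases Qb) auto
    with \<open>count (mset Qb) c2 = 0\<close> show ?thesis by (simp del: count_mset_0_iff)
  qed simp
qed

lemma reads_vblock_pair_from_x_block:
  assumes "reads Q (v s @ v s) Q'" "sublist (replicate g x) Q" "s < g"
  shows "sublist (replicate g x) Q' \<or> sublist (replicate s y) Q' \<or> odd (count (mset Q') c1)"
proof -
  obtain A B where Q: "Q = A @ replicate g x @ B" using assms(2) by (auto simp: sublist_def)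
  obtain Q1 where r1: "reads Q (v s) Q1" and r2: "reads Q1 (v s) Q'"
    using assms(1) by (auto simp: reads_append simp del: reads.simps(2))
  have vs: "v s = [c1] @ replicate s x @ replicate s y @ [c2]" by (simp add: vblock_eq)
  have x: "length (replicate s x) < g" "x \<notin> set [c1]" "x \<notin> set (replicate s y @ [c2])"
    using assms(3) distinct by auto
  from r1[unfolded Q vs] x show ?thesis
  proof (cases rule: reads_across_long_block)
    case (1 A1 B1)
    from r2[unfolded 1 vs] x show ?thesis
    proof (cases rule: reads_across_long_block)
      case (2 k T)
      then have "Q' = (replicate k x @ T) @ replicate s y @ [c2]" by simp
      then show ?thesis by (simp only: sublist_appendI simp_thms)
    qed (simp only: sublist_appendI simp_thms)
  next
    case (2 k T)
    from reads_vblock_after_x_front[OF r2[unfolded 2(2)] 2(1)] show ?thesis by blast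
  qed
qed

lemma reads_vblock_pair_from_y_block:
  assumes "reads Q (v s @ v s) Q'" "sublist (replicate g y) Q" "s < g"
  shows "sublist (replicate g y) Q' \<or> sublist (replicate s x) Q' \<or>
    (\<exists>k T. 0 < k \<and> Q' = replicate k y @ T @ [c2])"
proof -
  obtain A B where Q: "Q = A @ replicate g y @ B" using assms(2) by (auto simp: sublist_def)
  obtain Q1 where r1: "reads Q (v s) Q1" and r2: "reads Q1 (v s) Q'"
    using assms(1) by (auto simp: reads_append simp del: reads.simps(2))
  have vs: "v s = (c1 # replicate s x) @ replicate s y @ [c2]" by (simp add: vblock_eq)
  have y: "length (replicate s y) < g" "y \<notin> set (c1 # replicate s x)" "y \<notin> set [c2]"
    using assms(3) distinct by auto
  from r1[unfolded Q vs] y show ?thesis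
  proof (cases rule: reads_across_long_block)
    case (1 A1 B1)
    from r2[unfolded 1 vs] y show ?thesis
    proof (cases rule: reads_across_long_block)
      case (1 A2 B2)
      then show ?thesis by (simp only: sublist_appendI simp_thms)
    qed blast
  next
    case (2 k T)
    then obtain k' where "Q1 = y # replicate k' y @ T @ [c2]" by (cases k) auto
    then have "Q1 \<noteq> []" "hd Q1 \<notin> {c1, x}" using distinct by auto
    with r2 obtain i C where "Q' = drop i Q1 @ (c1 # replicate s x) @ C"
      by (elim reads_vblock_keeps_c1_x)
    then show ?thesis by (simp only: sublist_Cons_middle simp_thms)
  qed
qed

lemma Vword_cannot_consume_long_block:
  assumes "m < g" "r \<in> {x, y}" "sublist (replicate g r) Q"
  shows "\<not> reads Q (V m) []"
  using assms
proof (induction m arbitrary: g r Q rule: less_induct)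
  case (less m)
  show ?case
  proof
    assume read: "reads Q (V m) []"
    show False
    proof (cases m)
      case 0
      with read less.prems show False by (auto simp: Vword_0 sublist_def)
    next
      case (Suc n)
      from read Suc obtain Q2 where r2: "reads Q (v (Suc n) @ v (Suc n)) Q2" and r3: "reads Q2 (V n) []"
        by (auto simp: Vword_Suc reads_append simp del: reads.simps(2))
      have IH: "\<not> sublist (replicate g' r') Q2" if "n < g'" "r' \<in> {x, y}" for g' r'
        using less.IH[OF _ that] r3 Suc by blast
      have parity: "\<not> odd (count (mset Q2) a)" for a
        using reads_Vword_empty_even[OF r3] by simp
      have "Suc n < g" using less.prems(1) Suc by simp
      from less.prems(2) consider "r = x" | "r = y" by blast
      then show False
      proof cases
        case 1
        with reads_vblock_pair_from_x_block[OF r2 _ \<open>Suc n < g\<close>] less.prems(3) IH parity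
        show False using \<open>Suc n < g\<close> by fastforce
      next
        case 2
        with reads_vblock_pair_from_y_block[OF r2 _ \<open>Suc n < g\<close>] less.prems(3) IH
        obtain k T where front: "0 < k" "Q2 = replicate k y @ T @ [c2]"
          using \<open>Suc n < g\<close> by fastforce
        show False
        proof (cases n)
          case 0
          with r3 front show False by (simp add: Vword_0)
        next
          case (Suc n')
          from r3 Suc obtain Q3 where r4: "reads Q2 (v n @ v n) Q3" and r5: "reads Q3 (V n') []"
            by (auto simp: Vword_Suc reads_append simp del: reads.simps(2))
          from reads_vblock_pair_after_y_front[OF r4[unfolded front(2)] front(1)]
          have "sublist (replicate n x) Q3 \<or> odd (count (mset Q3) c2)" by simp
          with less.IH[of n' n x Q3] r5 reads_Vword_empty_even[OF r5] Suc \<open>m = Suc n\<close> show False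
            by auto
        qed
      qed
    qed
  qed
qed

lemma Vword_cannot_consume_two_c2:
  assumes "set S \<subseteq> {y, c2}" "2 \<le> count (mset S) c2"
  shows "\<not> reads S (V m) []"
proof
  assume read: "reads S (V m) []"
  have "S \<noteq> []" using assms(2) by auto
  show False
  proof (cases m)
    case 0
    with read \<open>S \<noteq> []\<close> show False by (simp add: Vword_0)
  next
    case (Suc n)
    from read Suc obtain Q2 Q3 where r1: "reads S (v m) Q2" and r2: "reads Q2 (v m) Q3"
      and r3: "reads Q3 (V n) []"
      by (auto simp: Vword_Suc reads_append simp del: reads.simps(2))
    have "hd S \<notin> {c1, x}" using hd_in_set[OF \<open>S \<noteq> []\<close>] assms(1) distinct by auto
    with r1 \<open>S \<noteq> []\<close> obtain i C where i: "Q2 = drop i S @ (c1 # replicate m x) @ C"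
      "mset (take i S) + mset C \<subseteq># mset (replicate m y @ [c2])"
      by (elim reads_vblock_keeps_c1_x)
    \<comment> \<open>reading y^m c2 pops at most one c2, so some of S stays in front of c1\<close>
    have "i < length S"
    proof (rule ccontr)
      assume "\<not> i < length S"
      then have "2 \<le> count (mset (take i S)) c2" using assms(2) by simp
      moreover have "count (mset (replicate m y @ [c2])) c2 = 1" using distinct by auto
      ultimately show False using mset_subset_eq_count[OF i(2), of c2] by simp
    qed
    from r2[unfolded i(1)] have "sublist (replicate m x) Q3"
      by (cases rule: reads_vblock_from_c1_x_factor) (use \<open>i < length S\<close> in simp_all)
    with r3 show False using Vword_cannot_consume_long_block[of n m x] Suc by simp
  qed
qed

lemma doubled_vblock_suffix_not_consumed:
  assumes "q < length (v (Suc n))"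
  shows "\<not> reads (drop q (v (Suc n)) @ drop q (v (Suc n))) (V n) []"
proof (cases "q \<le> Suc n + 1")
  case True
  have "drop q (v (Suc n)) = drop q ((c1 # replicate (Suc n) x) @ replicate (Suc n) y @ [c2])"
    by (simp add: vblock_eq)
  also have "\<dots> = drop q (c1 # replicate (Suc n) x) @ replicate (Suc n) y @ [c2]"
    using True by (subst drop_append) simp
  finally have "sublist (replicate (Suc n) y) (drop q (v (Suc n)) @ drop q (v (Suc n)))"
    by (metis append.assoc sublist_appendI)
  then show ?thesis using Vword_cannot_consume_long_block[of n "Suc n" y] by simp
next
  case False
  have "drop q (v (Suc n)) = drop q ((c1 # replicate (Suc n) x) @ replicate (Suc n) y @ [c2])"
    by (simp add: vblock_eq)
  also have "\<dots> = drop (q - (Suc n + 1)) (replicate (Suc n) y @ [c2])"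
    using False by (subst drop_append) simp
  also have "\<dots> = replicate (2 * Suc n + 1 - q) y @ [c2]"
    using assms False by (simp add: length_vblock drop_append del: replicate.simps(2))
  finally have "set (drop q (v (Suc n))) \<subseteq> {y, c2}" "c2 \<in> set (drop q (v (Suc n)))"
    by auto
  moreover from this(2) have "0 < count (mset (drop q (v (Suc n)))) c2" by (rule count_mset_gt_0)
  then have "2 \<le> count (mset (drop q (v (Suc n)) @ drop q (v (Suc n)))) c2"
    by (simp only: mset_append count_union)
  ultimately show ?thesis using Vword_cannot_consume_two_c2 by simp
qed

section \<open>Uniqueness of the computation\<close>

lemma letters_contiguous_vblock: "letters_contiguous (v s)"
  using distinct unfolding letters_contiguous_def by (auto simp: nth_vblock length_vblock)

lemma reads_Nil_vblock_prefix: "reads [] (take p (v s)) Q \<Longrightarrow> Q = take p (v s)"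
  by (rule reads_Nil_prefix_fresh_head) (use distinct in \<open>auto simp: vblock_eq\<close>)

lemma reads_Nil_vblock: "reads [] (v s) Q \<Longrightarrow> Q = v s"
  using reads_Nil_vblock_prefix[of "length (v s)" s Q] by simp

lemma reads_vblock_pair_then_Vword:
  assumes "reads [] (v (Suc n) @ v (Suc n)) Q" "reads Q (V n) []"
  shows "Q = []"
proof -
  let ?v = "v (Suc n)"
  from assms(1) obtain Q1 where r1: "reads [] ?v Q1" and r2: "reads Q1 ?v Q"
    by (auto simp: reads_append)
  from r1 have "Q1 = ?v" by (rule reads_Nil_vblock)
  with r2 letters_contiguous_vblock obtain q where "q \<le> length ?v" "Q = drop q ?v @ drop q ?v"
    using reads_own_prefix[of ?v "length ?v" Q] by auto
  then show ?thesis using doubled_vblock_suffix_not_consumed[of q n] assms(2) by fastforce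
qed

lemma reads_second_vblock_forced:
  assumes "p \<le> length (v (Suc m))" "reads [] (v (Suc m) @ take p (v (Suc m))) Q"
    "reads Q (drop p (v (Suc m)) @ V m) []"
  shows "Q = drop p (v (Suc m))"
proof -
  let ?v = "v (Suc m)"
  obtain Q1 where "reads [] ?v Q1" "reads Q1 (take p ?v) Q"
    using assms(2) by (auto simp: reads_append)
  moreover from this(1) have "Q1 = ?v" by (rule reads_Nil_vblock)
  ultimately have second: "reads ?v (take p ?v) Q" by simp
  then obtain q where q: "q \<le> p" "Q = drop q ?v @ drop q (take p ?v)"
    using reads_own_prefix[OF letters_contiguous_vblock assms(1)] by blast
  obtain Q2 where rest: "reads Q (drop p ?v) Q2" and "reads Q2 (V m) []"
    using assms(3) by (auto simp: reads_append)
  moreover have "reads [] (?v @ ?v) Q2"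
  proof -
    have "reads [] ?v ?v" using reads_push_all[of "[]" ?v] by simp
    moreover have "reads ?v ?v Q2"
      using reads_append[of ?v "take p ?v" "drop p ?v" Q2] second rest by auto
    ultimately show ?thesis by (auto simp: reads_append)
  qed
  ultimately have "Q2 = []" by (simp add: reads_vblock_pair_then_Vword)
  with rest have "length Q \<le> length ?v - p" by (auto dest: reads_empty_length)
  \<comment> \<open>the leftover queue must be short enough to be consumed by the rest of the copy\<close>
  with q assms(1) have "q = p" by simp
  with q show ?thesis by simp
qed

lemma Vword_queue_unique:
  assumes "i \<le> length (V m)" "reads [] (take i (V m)) Q" "reads Q (drop i (V m)) []"
  shows "Q = Vword_queue m i"
  using assms
proof (induction m arbitrary: i Q)
  case 0
  then show ?case by (simp add: Vword_0)
next
  case (Suc m)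
  let ?v = "v (Suc m)"
  let ?n = "length ?v"
  consider (first) "i \<le> ?n" | (second) p where "p \<le> ?n" "i = ?n + p"
    | (later) p where "i = 2 * ?n + p"
  proof (cases "i \<le> ?n")
    case True
    then show thesis by (rule that(1))
  next
    case False
    show thesis
    proof (cases "i \<le> 2 * ?n")
      case True
      with False show thesis using that(2)[of "i - ?n"] by simp
    next
      case False
      then show thesis using that(3)[of "i - 2 * ?n"] by simp
    qed
  qed
  then show ?case
  proof cases
    case first
    then have "reads [] (take i ?v) Q" using Suc.prems(2) by (simp add: Vword_Suc)
    with first show ?thesis by (simp add: reads_Nil_vblock_prefix)
  next
    case (second p)
    then have "Q = drop p ?v"
      using Suc.prems(2,3) by (intro reads_second_vblock_forced) (simp_all add: Vword_Suc)
    with second show ?thesis by auto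
  next
    case (later p)
    then have "reads [] ((?v @ ?v) @ take p (V m)) Q" using Suc.prems(2) by (simp add: Vword_Suc)
    then obtain Q2 where r1: "reads [] (?v @ ?v) Q2" and r2: "reads Q2 (take p (V m)) Q"
      by (auto simp only: reads_append)
    have r3: "reads Q (drop p (V m)) []" using Suc.prems(3) later by (simp add: Vword_Suc)
    with r2 have "reads Q2 (V m) []" using reads_append[of Q2 "take p (V m)" "drop p (V m)"] by auto
    with r1 have "Q2 = []" by (rule reads_vblock_pair_then_Vword)
    moreover have "p \<le> length (V m)" using Suc.prems(1) later by (simp add: length_Vword_Suc)
    ultimately have "Q = Vword_queue m p" using Suc.IH r2 r3 by simp
    with later show ?thesis by (simp add: Vword_queue_0)
  qed
qed

lemma accepting_comp_Vword_queue:
  assumes "accepting_comp (V m) cs" "i \<le> length (V m)"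
  shows "fst (cs ! i) = Vword_queue m i"
  using Vword_queue_unique[OF assms(2) accepting_comp_reads_split[OF assms]] .

lemma Vword_unique_accepting_comp: "\<exists>!cs. accepting_comp (V m) cs"
proof -
  let ?canonical = "map (\<lambda>i. (Vword_queue m i, drop i (V m))) [0..<Suc (length (V m))]"
  have canonical: "cs = ?canonical" if "accepting_comp (V m) cs" for cs
  proof -
    have "cs = map (\<lambda>i. (fst (cs ! i), drop i (V m))) [0..<Suc (length (V m))]"
      using that by (rule accepting_comp_eq)
    also have "\<dots> = ?canonical"
      by (intro map_cong refl) (simp add: accepting_comp_Vword_queue[OF that] del: upt_Suc)
    finally show ?thesis .
  qed
  obtain cs where "accepting_comp (V m) cs"
    using reads_computation[OF reads_Vword, of m] unfolding accepting_comp_def by blast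
  then show ?thesis using canonical by blast
qed

lemma Vword_blocks_matched:
  assumes "accepting_comp (V m) cs" "1 \<le> k" "k \<le> m" "i < length (v k)"
  shows "matched cs (voff m k + i) (voff m k + length (v k) + i)"
proof -
  let ?n = "length (v k)"
  let ?p = "voff m k + i" and ?q = "voff m k + ?n + i"
  have bound: "?q < length (V m)" using voff_bound[OF assms(2,3)] assms(4) by simp
  have queue: "length (fst (cs ! (voff m k + j))) = (if j \<le> ?n then j else 2 * ?n - j)"
    if "j \<le> 2 * ?n" for j
    using accepting_comp_Vword_queue[OF assms(1), of "voff m k + j"] Vword_queue_voff[OF assms(2,3) that]
      voff_bound[OF assms(2,3)] that by auto
  have "?p < ?q" by (simp add: length_vblock)
  moreover note bound
  moreover have "is_push cs ?p"
    using queue[of i] queue[of "Suc i"] assms(4) by (simp add: is_push_def)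
  moreover have "\<not> is_push cs ?q"
    using queue[of "?n + i"] queue[of "?n + Suc i"] assms(4) by (simp add: is_push_def add.assoc) arith
  moreover have "?p + length (fst (cs ! ?p)) + length (fst (cs ! ?q)) = ?q"
    using queue[of i] queue[of "?n + i"] assms(4) by (simp add: add.assoc)
  ultimately show ?thesis by (rule matched_if_queue_lengths[OF assms(1)])
qed

end

theorem theorem3:
  fixes c1 c2 x y :: 'a and l :: nat
  assumes "distinct [c1, c2, x, y]" and "l \<ge> 1"
  shows "(\<exists>!cs. accepting_comp (Vword c1 c2 x y l) cs) \<and>
    (\<forall>cs. accepting_comp (Vword c1 c2 x y l) cs \<longrightarrow>
       (\<forall>k i. 1 \<le> k \<and> k \<le> l \<and> i < 2 * k + 2 \<longrightarrow>
          matched cs (voff l k + i) (voff l k + (2 * k + 2) + i)))"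
proof -
  interpret distinct_vword c1 c2 x y
    using assms(1) by unfold_locales
  show ?thesis
    using Vword_unique_accepting_comp Vword_blocks_matched length_vblock by auto
qed

end
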